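(* Let $n\ge1$. For each $k\in\{0,1,\dots,n\}$ there is a unique polynomial $H_k$ of degree $k$ such that \[ \sum_{y=0}^n H_k(y)\binom{n}{y}x^y(1-x)^{n-y}=\tilde T_k(x)\quad\text{for all }x\in[0,1]. \] These polynomials are orthogonal with respect to $P_{Y_r}$: $\mathbb E[H_k(Y_r)H_m(Y_r)]=0$ for $0\le m<k\le n$. Moreover $\mathbb E[H_0(Y_r)^2]=1$ and, for $1\le k\le n$, \[ h_k:=\mathbb E[H_k(Y_r)^2]=\frac12\prod_{j=1}^k\frac{n+j}{n-j+1}. \]
   Context: $\tilde T_k(x)=\cos(k\arccos(2x-1))$, $x\in[0,1]$, is the shifted Chebyshev polynomial of the first kind of degree $k$. $Y_r$ is a random variable with the Beta-binomial pmf $P_{Y_r}(y)=\frac{\Gamma(y+1/2)\Gamma(n-y+1/2)}{\pi\,\Gamma(y+1)\Gamma(n-y+1)}$, $y=0,\dots,n$ (the output of the binomial channel $P_{Y|X}(y|x)=\binom{n}{y}x^y(1-x)^{n-y}$ when $X\sim\mathrm{Beta}(1/2,1/2)$). *)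

theory Defs
  imports "HOL-Analysis.Analysis" "HOL-Computational_Algebra.Polynomial"
begin

definition shifted_cheb :: "nat \<Rightarrow> real \<Rightarrow> real" where
  "shifted_cheb k x = cos (real k * arccos (2 * x - 1))"

text \<open>Beta-binomial pmf of Y_r (output of binomial channel with Beta(1/2,1/2) input).\<close>
definition PYr :: "nat \<Rightarrow> nat \<Rightarrow> real" where
  "PYr n y = Gamma (real y + 1/2) * Gamma (real n - real y + 1/2)
             / (pi * Gamma (real y + 1) * Gamma (real n - real y + 1))"

definition EYr :: "nat \<Rightarrow> (real \<Rightarrow> real) \<Rightarrow> real" where
  "EYr n f = (\<Sum>y=0..n. PYr n y * f (real y))"

definition binom_transform :: "nat \<Rightarrow> real poly \<Rightarrow> real \<Rightarrow> real" where
  "binom_transform n H x =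
     (\<Sum>y=0..n. poly H (real y) * real (n choose y) * x ^ y * (1 - x) ^ (n - y))"

end

theory Submission
  imports Defs
begin

text \<open>
  Let \<open>A p = (1/pi) * integral {0..pi} (\<lambda>t. p ((1 + cos t) / 2))\<close> be the mean of \<open>p(X)\<close> for
  \<open>X ~ Beta(1/2, 1/2)\<close>; the shifted Chebyshev polynomials \<open>T_k\<close> are \<open>A\<close>-orthogonal, with
  \<open>A (T_k^2) = 1/2\<close> for \<open>k \<ge> 1\<close>. Since the moments \<open>A (x^a (1-x)^b)\<close> are Beta-function
  ratios, the Beta-binomial law of \<open>Y_r\<close> satisfies \<open>E[H(Y_r) (Y_r + 1/2)_j] = (n+1)_j A (x^j B H)\<close>,
  where \<open>B H\<close> is the binomial transform of \<open>H\<close>. If \<open>B H = T_k\<close> this vanishes for \<open>j < k\<close>; as the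
  rising factorials \<open>(y + 1/2)_j\<close> form a monic basis, \<open>E[H(Y_r) p(Y_r)]\<close> then only depends on the
  coefficient of \<open>y^k\<close> in \<open>p\<close> when \<open>deg p \<le> k\<close>. This gives the orthogonality, and the norms follow
  from the leading coefficient of \<open>H_k\<close>, read off the explicit preimage
  \<open>\<Sum>j. c_j / (n choose j) * (y choose j)\<close> of \<open>\<Sum>j. c_j x^j\<close>. Uniqueness: if \<open>B D = 0\<close> then
  \<open>E[D(Y_r)^2] = 0\<close>, so \<open>D\<close> vanishes at \<open>0, ..., n\<close>.
\<close>

lemma linear_functional_poly_eq_leading_coeff:
  fixes \<Phi> :: "'a::field poly \<Rightarrow> 'a" and B :: "nat \<Rightarrow> 'a poly"
  assumes add: "\<And>p q. \<Phi> (p + q) = \<Phi> p + \<Phi> q"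
    and smult: "\<And>c p. \<Phi> (smult c p) = c * \<Phi> p"
    and degree_B: "\<And>j. degree (B j) = j"
    and lead_B: "\<And>j. lead_coeff (B j) \<noteq> 0"
    and vanish: "\<And>j. j < k \<Longrightarrow> \<Phi> (B j) = 0"
    and "degree p \<le> k"
  shows "\<Phi> p = coeff p k / lead_coeff (B k) * \<Phi> (B k)"
  using vanish \<open>degree p \<le> k\<close>
proof (induction k arbitrary: p)
  case (0 p)
  have "p = smult (coeff p 0 / lead_coeff (B 0)) (B 0)"
    using 0 lead_B[of 0] degree_B[of 0] degree_0_id[of p] degree_0_id[of "B 0"]
    by (metis le_zero_eq nonzero_divide_eq_eq smult_pCons smult_0_right)
  then show ?case
    using smult by (metis degree_B)
next
  case (Suc k p)
  define c where "c = coeff p (Suc k) / lead_coeff (B (Suc k))"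
  define r where "r = p - smult c (B (Suc k))"
  have "degree r \<le> Suc k" "coeff r (Suc k) = 0"
    using Suc.prems(2) lead_B[of "Suc k"] degree_B[of "Suc k"]
    by (auto simp: r_def c_def intro: degree_diff_le)
  then have "degree r \<le> k"
    by (metis le_SucE leading_coeff_0_iff degree_0 nat.distinct(1))
  then have "\<Phi> r = 0"
    using Suc by simp
  moreover have "p = r + smult c (B (Suc k))"
    by (simp add: r_def)
  ultimately show ?case
    using add smult degree_B by (metis c_def add_0)
qed

fun shifted_cheb_poly :: "nat \<Rightarrow> real poly" where
  "shifted_cheb_poly 0 = 1"
| "shifted_cheb_poly (Suc 0) = [:-1, 2:]"
| "shifted_cheb_poly (Suc (Suc k)) = [:-2, 4:] * shifted_cheb_poly (Suc k) - shifted_cheb_poly k"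

lemma poly_shifted_cheb_poly_cos:
  "poly (shifted_cheb_poly k) ((1 + cos t) / 2) = cos (real k * t)"
proof (induction k rule: shifted_cheb_poly.induct)
  case (3 k)
  have "cos (real (Suc (Suc k)) * t) + cos (real k * t) = 2 * cos t * cos (real (Suc k) * t)"
    using cos_add[of "real (Suc k) * t" t] cos_diff[of "real (Suc k) * t" t]
    by (simp add: algebra_simps)
  with 3 show ?case by (simp add: algebra_simps)
qed (simp_all add: field_simps)

lemma shifted_cheb_poly_degree_lead_coeff:
  "degree (shifted_cheb_poly k) = k \<and> lead_coeff (shifted_cheb_poly k) > 0"
proof (induction k rule: shifted_cheb_poly.induct)
  case (3 k)
  let ?p = "[:-2, 4:] * shifted_cheb_poly (Suc k)"
  have "shifted_cheb_poly (Suc k) \<noteq> 0"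
    using 3 by (metis degree_0 nat.distinct(1))
  then have deg: "degree ?p = Suc (Suc k)"
    using 3 by (simp add: degree_mult_eq del: mult_pCons_left)
  have lead: "coeff ?p (Suc (Suc k)) = 4 * lead_coeff (shifted_cheb_poly (Suc k))"
    using 3 by (simp add: coeff_eq_0)
  have "degree (- shifted_cheb_poly k) < degree ?p"
    using 3 deg by simp
  moreover have "shifted_cheb_poly (Suc (Suc k)) = - shifted_cheb_poly k + ?p"
    by simp
  ultimately show ?case
    using 3 deg lead by (simp only: degree_add_eq_right lead_coeff_add_le) (auto simp: coeff_eq_0)
qed simp_all

lemma degree_shifted_cheb_poly [simp]: "degree (shifted_cheb_poly k) = k"
  using shifted_cheb_poly_degree_lead_coeff by blast

lemma lead_coeff_shifted_cheb_poly_pos: "coeff (shifted_cheb_poly k) k > 0"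
  using shifted_cheb_poly_degree_lead_coeff[of k] by simp

lemma shifted_cheb_eq_poly:
  assumes "x \<in> {0..1}"
  shows "shifted_cheb k x = poly (shifted_cheb_poly k) x"
proof -
  have "x = (1 + cos (arccos (2 * x - 1))) / 2"
    using assms by (simp add: cos_arccos)
  then show ?thesis
    unfolding shifted_cheb_def by (metis poly_shifted_cheb_poly_cos)
qed

text \<open>The substitution \<open>x = (1 + cos t) / 2\<close> turns the arcsine density
  \<open>1 / (pi * sqrt (x * (1 - x)))\<close> on \<open>[0, 1]\<close> into the uniform density \<open>1 / pi\<close> on \<open>[0, pi]\<close>.\<close>

definition arcsine_mean :: "real poly \<Rightarrow> real" where
  "arcsine_mean p = integral {0..pi} (\<lambda>t. poly p ((1 + cos t) / 2)) / pi"

lemma integrable_poly_cos: "(\<lambda>t. poly p ((1 + cos t) / 2)) integrable_on {0..pi}"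
  by (intro integrable_continuous_interval continuous_intros) auto

lemma arcsine_mean_add: "arcsine_mean (p + q) = arcsine_mean p + arcsine_mean q"
  unfolding arcsine_mean_def poly_add integral_add[OF integrable_poly_cos integrable_poly_cos]
  by (simp add: add_divide_distrib)

lemma arcsine_mean_smult: "arcsine_mean (smult c p) = c * arcsine_mean p"
  by (simp add: arcsine_mean_def)

lemma arcsine_mean_diff: "arcsine_mean (p - q) = arcsine_mean p - arcsine_mean q"
  unfolding arcsine_mean_def poly_diff integral_diff[OF integrable_poly_cos integrable_poly_cos]
  by (simp add: diff_divide_distrib)

lemma arcsine_mean_sum: "arcsine_mean (\<Sum>i\<in>A. f i) = (\<Sum>i\<in>A. arcsine_mean (f i))"
  by (induction A rule: infinite_finite_induct)
    (auto simp: arcsine_mean_add, simp_all add: arcsine_mean_def)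

lemma arcsine_mean_cong:
  assumes "\<And>x. x \<in> {0..1} \<Longrightarrow> poly p x = poly q x"
  shows "arcsine_mean p = arcsine_mean q"
proof -
  have "poly p ((1 + cos t) / 2) = poly q ((1 + cos t) / 2)" for t
    by (rule assms)
      (use cos_ge_minus_one[of t] cos_le_one[of t] in \<open>simp del: cos_ge_minus_one cos_le_one\<close>)
  then show ?thesis
    by (simp add: arcsine_mean_def)
qed

lemma integral_cos_nat_mult:
  "integral {0..pi} (\<lambda>t. cos (real m * t)) = (if m = 0 then pi else 0)"
proof (cases "m = 0")
  case False
  have "((\<lambda>t. cos (real m * t)) has_integral
      sin (real m * pi) / real m - sin (real m * 0) / real m) {0..pi}"
  proof (rule fundamental_theorem_of_calculus)
    fix x :: real
    show "((\<lambda>t. sin (real m * t) / real m) has_vector_derivative cos (real m * x))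
        (at x within {0..pi})"
      unfolding has_real_derivative_iff_has_vector_derivative[symmetric]
      using False by (auto intro!: derivative_eq_intros)
  qed simp
  then show ?thesis
    using False by (simp add: integral_unique sin_npi_int)
qed simp

lemma arcsine_mean_shifted_cheb_poly_mult:
  "arcsine_mean (shifted_cheb_poly i * shifted_cheb_poly k) =
     (if i \<noteq> k then 0 else if k = 0 then 1 else 1/2)"
proof -
  define d where "d = (if k \<le> i then i - k else k - i)"
  have "cos (real i * t - real k * t) = cos (real d * t)" for t
  proof (cases "k \<le> i")
    case False
    then have "real d * t = - (real i * t - real k * t)"
      by (simp add: d_def of_nat_diff algebra_simps)
    then show ?thesis
      by (simp only: cos_minus)
  qed (simp add: d_def of_nat_diff left_diff_distrib)
  then have prod: "cos (real i * t) * cos (real k * t)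
      = (cos (real d * t) + cos (real (i + k) * t)) / 2" for t
    by (simp add: cos_times_cos algebra_simps)
  have "arcsine_mean (shifted_cheb_poly i * shifted_cheb_poly k) =
      integral {0..pi} (\<lambda>t. (cos (real d * t) + cos (real (i + k) * t)) / 2) / pi"
    unfolding arcsine_mean_def poly_mult poly_shifted_cheb_poly_cos prod ..
  also have "\<dots> = (integral {0..pi} (\<lambda>t. cos (real d * t))
      + integral {0..pi} (\<lambda>t. cos (real (i + k) * t))) / 2 / pi"
    by (simp add: integral_add integral_divide integrable_continuous_interval continuous_intros)
  finally show ?thesis
    unfolding integral_cos_nat_mult d_def by auto
qed

definition arcsine_moment :: "nat \<Rightarrow> nat \<Rightarrow> real" where
  "arcsine_moment a b = arcsine_mean ([:0, 1:] ^ a * [:1, -1:] ^ b)"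

lemma poly_x_pow_mult_one_minus_x_pow: "poly ([:0, 1:] ^ a * [:1, -1:] ^ b) x = x ^ a * (1 - x) ^ b"
  for x :: "'a::comm_ring_1"
  by (simp add: poly_power)

lemma arcsine_moment_0_0: "arcsine_moment 0 0 = 1"
  by (simp add: arcsine_moment_def arcsine_mean_def)

lemma arcsine_moment_split:
  "arcsine_moment a b = arcsine_moment (a + 1) b + arcsine_moment a (b + 1)"
proof -
  have "[:0, 1:] ^ (a + 1) * [:1, -1:] ^ b + [:0, 1:] ^ a * [:1, -1:] ^ (b + 1) =
      [:0, 1:] ^ a * [:1, -1:] ^ b * ([:0, 1:] + [:1, -1:] :: real poly)"
    by (simp add: algebra_simps)
  also have "[:0, 1:] + [:1, -1:] = (1 :: real poly)"
    by (simp add: one_pCons)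
  finally have "[:0, 1:] ^ a * [:1, -1:] ^ b =
      [:0, 1:] ^ (a + 1) * [:1, -1:] ^ b + ([:0, 1:] ^ a * [:1, -1:] ^ (b + 1) :: real poly)"
    by simp
  then show ?thesis
    unfolding arcsine_moment_def by (simp only: arcsine_mean_add)
qed

lemma has_real_derivative_half_angle_powers:
  "((\<lambda>t. cos (t / 2) ^ Suc (2 * a) * sin (t / 2) ^ Suc (2 * b)) has_real_derivative
     ((2 * real b + 1) * ((1 + cos t) / 2) ^ (a + 1) * ((1 - cos t) / 2) ^ b
      - (2 * real a + 1) * ((1 + cos t) / 2) ^ a * ((1 - cos t) / 2) ^ (b + 1)) / 2) (at t)"
proof -
  have half: "(1 + cos t) / 2 = cos (t / 2) ^ 2" "(1 - cos t) / 2 = sin (t / 2) ^ 2"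
    using cos_double_cos[of "t / 2"] cos_double_sin[of "t / 2"] by simp_all
  have "((\<lambda>t. cos (t / 2)) has_real_derivative - sin (t / 2) / 2) (at t)"
    "((\<lambda>t. sin (t / 2)) has_real_derivative cos (t / 2) / 2) (at t)"
    by (auto intro!: derivative_eq_intros)
  then show ?thesis
  proof (rule DERIV_mult[OF DERIV_power_Suc DERIV_power_Suc, THEN DERIV_cong])
    show "(1 + real (2 * a)) * (- sin (t / 2) / 2 * cos (t / 2) ^ (2 * a)) * sin (t / 2) ^ Suc (2 * b)
        + (1 + real (2 * b)) * (cos (t / 2) / 2 * sin (t / 2) ^ (2 * b)) * cos (t / 2) ^ Suc (2 * a)
        = ((2 * real b + 1) * ((1 + cos t) / 2) ^ (a + 1) * ((1 - cos t) / 2) ^ b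
           - (2 * real a + 1) * ((1 + cos t) / 2) ^ a * ((1 - cos t) / 2) ^ (b + 1)) / 2"
      unfolding half power_mult[symmetric] by (simp add: field_simps)
  qed
qed

text \<open>Integration by parts against the arcsine density: at \<open>x = (1 + cos t) / 2\<close> the function
  differentiated above is \<open>sin t * x ^ a * (1 - x) ^ b / 2\<close>, which vanishes at \<open>t = 0\<close> and
  \<open>t = pi\<close>.\<close>

lemma arcsine_moment_pearson:
  "(2 * real b + 1) * arcsine_moment (a + 1) b = (2 * real a + 1) * arcsine_moment a (b + 1)"
proof -
  define F where "F t = cos (t / 2) ^ Suc (2 * a) * sin (t / 2) ^ Suc (2 * b)" for t :: real
  define E where "E t = (2 * real b + 1) * ((1 + cos t) / 2) ^ (a + 1) * ((1 - cos t) / 2) ^ b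
      - (2 * real a + 1) * ((1 + cos t) / 2) ^ a * ((1 - cos t) / 2) ^ (b + 1)" for t :: real
  have "((\<lambda>t. E t / 2) has_integral F pi - F 0) {0..pi}"
    using has_real_derivative_half_angle_powers[of a b]
    by (intro fundamental_theorem_of_calculus)
      (auto simp: F_def E_def has_real_derivative_iff_has_vector_derivative[symmetric]
        intro: has_field_derivative_at_within)
  then have "((\<lambda>t. E t / 2) has_integral 0) {0..pi}"
    by (simp add: F_def)
  then have "integral {0..pi} (\<lambda>t. E t / 2) = 0"
    by (rule integral_unique)
  then have "integral {0..pi} E = 0"
    by simp
  have complement: "1 - (1 + cos t) / 2 = (1 - cos t) / 2" for t :: real
    by (simp add: field_simps)
  have integrand: "poly (smult (2 * real b + 1) ([:0, 1:] ^ (a + 1) * [:1, -1:] ^ b)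
      - smult (2 * real a + 1) ([:0, 1:] ^ a * [:1, -1:] ^ (b + 1))) ((1 + cos t) / 2) = E t" for t
    unfolding E_def poly_diff poly_smult poly_x_pow_mult_one_minus_x_pow complement by (simp only: mult.assoc)
  have "arcsine_mean (smult (2 * real b + 1) ([:0, 1:] ^ (a + 1) * [:1, -1:] ^ b)
      - smult (2 * real a + 1) ([:0, 1:] ^ a * [:1, -1:] ^ (b + 1))) = 0"
    unfolding arcsine_mean_def integrand \<open>integral {0..pi} E = 0\<close> by simp
  then show ?thesis
    unfolding arcsine_moment_def arcsine_mean_diff arcsine_mean_smult by simp
qed

lemma arcsine_moment_Suc_left:
  "arcsine_moment (a + 1) b = (2 * real a + 1) / (2 * real a + 2 * real b + 2) * arcsine_moment a b"
  using arcsine_moment_split[of a b] arcsine_moment_pearson[of b a]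
  by (simp add: field_simps)

lemma arcsine_moment_Suc_right:
  "arcsine_moment a (b + 1) = (2 * real b + 1) / (2 * real a + 2 * real b + 2) * arcsine_moment a b"
  using arcsine_moment_split[of a b] arcsine_moment_pearson[of b a]
  by (simp add: field_simps)

lemma Gamma_plus1_pos: "x > 0 \<Longrightarrow> Gamma (x + 1) = x * Gamma x" for x :: real
  by (rule Gamma_plus1) auto

lemma arcsine_moment_eq_Gamma:
  "arcsine_moment a b
     = Gamma (real a + 1/2) * Gamma (real b + 1/2) / (pi * Gamma (real a + real b + 1))"
proof (induction a arbitrary: b)
  case 0
  show ?case
  proof (induction b)
    case 0
    show ?case
      by (simp add: arcsine_moment_0_0 Gamma_one_half_real)
  next
    case (Suc b)
    have Gamma_Suc: "Gamma (real (Suc b) + 1/2) = (real b + 1/2) * Gamma (real b + 1/2)"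
      "Gamma (real 0 + real (Suc b) + 1) = (real b + 1) * Gamma (real 0 + real b + 1)"
      using Gamma_plus1_pos[of "real b + 1/2"] Gamma_plus1_pos[of "real b + 1"]
      by (simp_all add: add_ac)
    have "Gamma (real 0 + real b + 1) > 0"
      by simp
    then show ?case
      unfolding Gamma_Suc unfolding Suc_eq_plus1 arcsine_moment_Suc_right Suc.IH
      by (simp add: field_simps)
  qed
next
  case (Suc a)
  have Gamma_Suc: "Gamma (real (Suc a) + 1/2) = (real a + 1/2) * Gamma (real a + 1/2)"
    "Gamma (real (Suc a) + real b + 1) = (real a + real b + 1) * Gamma (real a + real b + 1)"
    using Gamma_plus1_pos[of "real a + 1/2"] Gamma_plus1_pos[of "real a + real b + 1"]
    by (simp_all add: add_ac)
  have "Gamma (real a + real b + 1) > 0"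
    by simp
  then show ?case
    unfolding Gamma_Suc unfolding Suc_eq_plus1 arcsine_moment_Suc_left Suc.IH
    by (simp add: field_simps)
qed

lemma PYr_pos: "y \<le> n \<Longrightarrow> PYr n y > 0"
  unfolding PYr_def by (intro divide_pos_pos mult_pos_pos) auto

text \<open>Both sides equal
  \<open>Gamma (y + j + 1/2) * Gamma (n - y + 1/2) / (pi * fact y * fact (n - y))\<close>.\<close>

lemma binomial_arcsine_moment_eq_PYr:
  assumes "y \<le> n"
  shows "real (n choose y) * arcsine_moment (y + j) (n - y) * pochhammer (real n + 1) j
       = PYr n y * pochhammer (real y + 1/2) j"
proof -
  have "real n + 1 \<notin> \<int>\<^sub>\<le>\<^sub>0" "real y + 1/2 \<notin> \<int>\<^sub>\<le>\<^sub>0"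
    by (auto dest: nonpos_Ints_nonpos)
  then have pochhammer_eq:
      "pochhammer (real n + 1) j = Gamma (real n + 1 + real j) / Gamma (real n + 1)"
    "pochhammer (real y + 1/2) j = Gamma (real y + 1/2 + real j) / Gamma (real y + 1/2)"
    by (simp_all add: pochhammer_Gamma)
  have binomial_eq:
      "real (n choose y) = Gamma (real n + 1) / (Gamma (real y + 1) * Gamma (real n - real y + 1))"
    using binomial_fact[OF assms, where 'a = real] assms Gamma_fact[of n, where 'a = real]
      Gamma_fact[of y, where 'a = real] Gamma_fact[of "n - y", where 'a = real]
    by (simp add: of_nat_diff add_ac)
  have moment_eq: "arcsine_moment (y + j) (n - y) =
      Gamma (real y + 1/2 + real j) * Gamma (real n - real y + 1/2) / (pi * Gamma (real n + 1 + real j))"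
    using assms by (simp add: arcsine_moment_eq_Gamma of_nat_diff algebra_simps)
  have "x > 0 \<Longrightarrow> Gamma x \<noteq> 0" for x :: real
    by (metis Gamma_real_pos less_irrefl)
  then show ?thesis
    unfolding binomial_eq moment_eq pochhammer_eq PYr_def using assms by (simp add: field_simps)
qed

definition rising_half :: "nat \<Rightarrow> real poly" where
  "rising_half j = pochhammer [:1/2, 1:] j"

lemma poly_rising_half: "poly (rising_half j) x = pochhammer (x + 1/2) j"
  unfolding rising_half_def
  by (induction j) (simp_all add: pochhammer_Suc of_nat_poly algebra_simps)

lemma rising_half_degree_lead_coeff:
  "degree (rising_half j) = j \<and> lead_coeff (rising_half j) = 1"
proof (induction j)
  case (Suc j)
  have "rising_half (Suc j) = rising_half j * [:1/2 + real j, 1:]"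
    unfolding rising_half_def by (simp add: pochhammer_Suc of_nat_poly)
  moreover have "rising_half j \<noteq> 0"
    using Suc by auto
  ultimately show ?case
    using Suc coeff_mult_degree_sum[of "rising_half j" "[:1/2 + real j, 1:]"]
    by (auto simp: degree_mult_eq simp del: mult_pCons_right)
qed (simp add: rising_half_def)

lemma degree_rising_half [simp]: "degree (rising_half j) = j"
  using rising_half_degree_lead_coeff by blast

lemma lead_coeff_rising_half [simp]: "coeff (rising_half j) j = 1"
  using rising_half_degree_lead_coeff[of j] by simp

definition binom_transform_poly :: "nat \<Rightarrow> real poly \<Rightarrow> real poly" where
  "binom_transform_poly n H =
     (\<Sum>y=0..n. smult (poly H (real y) * real (n choose y)) ([:0, 1:] ^ y * [:1, -1:] ^ (n - y)))"

lemma poly_binom_transform_poly: "poly (binom_transform_poly n H) x = binom_transform n H x"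
  unfolding binom_transform_poly_def binom_transform_def poly_sum poly_smult poly_x_pow_mult_one_minus_x_pow
  by (simp add: algebra_simps)

lemma EYr_mult_rising_half:
  "EYr n (\<lambda>y. poly H y * poly (rising_half j) y)
     = pochhammer (real n + 1) j * arcsine_mean ([:0, 1:] ^ j * binom_transform_poly n H)"
proof -
  have "[:0, 1:] ^ j * binom_transform_poly n H =
      (\<Sum>y=0..n. smult (poly H (real y) * real (n choose y))
         ([:0, 1:] ^ (y + j) * [:1, -1:] ^ (n - y)))"
    unfolding binom_transform_poly_def sum_distrib_left by (simp add: power_add ac_simps)
  then have "pochhammer (real n + 1) j * arcsine_mean ([:0, 1:] ^ j * binom_transform_poly n H)
      = (\<Sum>y=0..n. poly H (real y) *
           (real (n choose y) * arcsine_moment (y + j) (n - y) * pochhammer (real n + 1) j))"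
    by (simp add: arcsine_mean_sum arcsine_mean_smult arcsine_moment_def sum_distrib_left ac_simps)
  also have "\<dots> = (\<Sum>y=0..n. poly H (real y) * (PYr n y * pochhammer (real y + 1/2) j))"
    by (intro sum.cong refl) (simp add: binomial_arcsine_moment_eq_PYr)
  finally show ?thesis
    by (simp add: EYr_def poly_rising_half ac_simps)
qed

lemma EYr_mult_eq_leading_coeff:
  assumes "\<And>j. j < k \<Longrightarrow> arcsine_mean ([:0, 1:] ^ j * binom_transform_poly n H) = 0"
    and "degree p \<le> k"
  shows "EYr n (\<lambda>y. poly H y * poly p y)
       = coeff p k * pochhammer (real n + 1) k
         * arcsine_mean ([:0, 1:] ^ k * binom_transform_poly n H)"
proof -
  have "EYr n (\<lambda>y. poly H y * poly p y)
      = coeff p k / lead_coeff (rising_half k) * EYr n (\<lambda>y. poly H y * poly (rising_half k) y)"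
  proof (rule linear_functional_poly_eq_leading_coeff
      [where \<Phi> = "\<lambda>p. EYr n (\<lambda>y. poly H y * poly p y)"])
    show "EYr n (\<lambda>y. poly H y * poly (rising_half j) y) = 0" if "j < k" for j
      using assms(1)[OF that] by (simp add: EYr_mult_rising_half)
  qed (use assms(2) in \<open>auto simp: EYr_def algebra_simps sum.distrib sum_distrib_left\<close>)
  then show ?thesis
    by (simp add: EYr_mult_rising_half)
qed

lemma EYr_mult_cheb_preimage:
  assumes "\<forall>x\<in>{0..1}. binom_transform n H x = shifted_cheb k x"
    and "degree p \<le> k"
  shows "EYr n (\<lambda>y. poly H y * poly p y)
       = coeff p k / lead_coeff (shifted_cheb_poly k) * pochhammer (real n + 1) k
         * arcsine_mean (shifted_cheb_poly k * shifted_cheb_poly k)"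
proof -
  have transform: "arcsine_mean ([:0, 1:] ^ j * binom_transform_poly n H)
      = arcsine_mean ([:0, 1:] ^ j * shifted_cheb_poly k)" for j
    using assms(1)
    by (intro arcsine_mean_cong) (simp add: poly_binom_transform_poly shifted_cheb_eq_poly)
  have cheb_moment: "arcsine_mean ([:0, 1:] ^ j * shifted_cheb_poly k)
      = coeff ([:0, 1:] ^ j) k / lead_coeff (shifted_cheb_poly k)
        * arcsine_mean (shifted_cheb_poly k * shifted_cheb_poly k)" if "j \<le> k" for j
    using that
    by (intro linear_functional_poly_eq_leading_coeff
        [where \<Phi> = "\<lambda>p. arcsine_mean (p * shifted_cheb_poly k)"])
      (auto simp: algebra_simps arcsine_mean_add arcsine_mean_smult
        arcsine_mean_shifted_cheb_poly_mult degree_linear_power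
        lead_coeff_shifted_cheb_poly_pos[THEN less_imp_neq, THEN not_sym])
  have "arcsine_mean ([:0, 1:] ^ j * binom_transform_poly n H) = 0" if "j < k" for j
    using that by (simp add: transform cheb_moment coeff_eq_0 degree_linear_power)
  from EYr_mult_eq_leading_coeff[OF this assms(2)] show ?thesis
    by (simp add: transform cheb_moment coeff_linear_power)
qed

lemma binom_transform_diff:
  "binom_transform n (p - q) x = binom_transform n p x - binom_transform n q x"
  unfolding binom_transform_def by (simp add: algebra_simps sum_subtractf)

lemma binom_transform_sum_smult:
  "binom_transform n (\<Sum>j\<in>A. smult (c j) (P j)) x = (\<Sum>j\<in>A. c j * binom_transform n (P j) x)"
  unfolding binom_transform_def poly_sum poly_smult
  by (simp add: sum_distrib_left sum_distrib_right algebra_simps sum.swap[of _ A])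

lemma poly_eq_0_if_binom_transform_eq_0:
  assumes "degree D \<le> n" and "\<And>x. x \<in> {0..1} \<Longrightarrow> binom_transform n D x = 0"
  shows "D = 0"
proof -
  have "arcsine_mean ([:0, 1:] ^ j * binom_transform_poly n D) = arcsine_mean 0" for j
    using assms(2) by (intro arcsine_mean_cong) (simp add: poly_binom_transform_poly)
  then have "EYr n (\<lambda>y. poly D y * poly D y) = 0"
    using EYr_mult_eq_leading_coeff[of "Suc n" n D D] assms(1)
    by (simp add: arcsine_mean_def coeff_eq_0)
  then have "\<forall>y\<in>{0..n}. PYr n y * (poly D (real y) * poly D (real y)) = 0"
    unfolding EYr_def
    by (subst (asm) sum_nonneg_eq_0_iff)
      (auto intro!: mult_nonneg_nonneg[OF PYr_pos[THEN less_imp_le] zero_le_square])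
  then have "poly D x = poly 0 x" if "x \<in> real ` {0..n}" for x
    using that PYr_pos by fastforce
  then show "D = 0"
    using assms(1)
    by (intro poly_eqI_degree[where A = "real ` {0..n}"]) (auto simp: card_image inj_on_def)
qed

lemma binom_transform_inj:
  assumes "degree H1 \<le> n" "degree H2 \<le> n"
    and "\<And>x. x \<in> {0..1} \<Longrightarrow> binom_transform n H1 x = binom_transform n H2 x"
  shows "H1 = H2"
  using poly_eq_0_if_binom_transform_eq_0[of "H1 - H2" n] assms
  by (simp add: binom_transform_diff degree_diff_le)

definition binomial_poly :: "nat \<Rightarrow> real poly" where
  "binomial_poly j = smult (1 / fact j) (\<Prod>i<j. [:- real i, 1:])"

lemma poly_binomial_poly: "poly (binomial_poly j) (real y) = real (y choose j)"
  by (simp add: binomial_poly_def poly_prod binomial_gbinomial gbinomial_prod_rev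
      lessThan_atLeast0)

lemma degree_binomial_poly [simp]: "degree (binomial_poly j) = j"
  by (simp add: binomial_poly_def degree_prod_sum_eq)

lemma lead_coeff_binomial_poly: "coeff (binomial_poly j) j = 1 / fact j"
  using lead_coeff_prod[of "\<lambda>i. [:- real i, 1:]" "{..<j}"]
  by (simp add: binomial_poly_def degree_prod_sum_eq)

lemma binom_transform_binomial_poly:
  assumes "j \<le> n"
  shows "binom_transform n (binomial_poly j) x = real (n choose j) * x ^ j"
proof -
  have "binom_transform n (binomial_poly j) x
      = (\<Sum>y=j..n. real (y choose j) * real (n choose y) * x ^ y * (1 - x) ^ (n - y))"
    unfolding binom_transform_def poly_binomial_poly
    by (rule sum.mono_neutral_right) (auto simp: binomial_eq_0)
  also have "\<dots> = (\<Sum>i=0..n-j. real ((i + j) choose j) * real (n choose (i + j))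
      * x ^ (i + j) * (1 - x) ^ (n - (i + j)))"
    using assms sum.shift_bounds_cl_nat_ivl[of
        "\<lambda>y. real (y choose j) * real (n choose y) * x ^ y * (1 - x) ^ (n - y)" 0 j "n - j"]
    by simp
  also have "\<dots> = (\<Sum>i=0..n-j. real (n choose j) * x ^ j
      * (real ((n - j) choose i) * x ^ i * (1 - x) ^ ((n - j) - i)))"
  proof (intro sum.cong refl)
    fix i assume "i \<in> {0..n-j}"
    then have "real (n choose (i + j)) * real ((i + j) choose j)
        = real (n choose j) * real ((n - j) choose i)"
      using choose_mult[of j "i + j" n] assms by (simp flip: of_nat_mult)
    moreover have "n - (i + j) = (n - j) - i"
      by simp
    ultimately show "real ((i + j) choose j) * real (n choose (i + j))
          * x ^ (i + j) * (1 - x) ^ (n - (i + j))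
        = real (n choose j) * x ^ j * (real ((n - j) choose i) * x ^ i * (1 - x) ^ ((n - j) - i))"
      by (simp add: power_add algebra_simps)
  qed
  also have "\<dots> = real (n choose j) * x ^ j * (x + (1 - x)) ^ (n - j)"
    unfolding binomial_ring sum_distrib_left by (simp add: atLeast0AtMost)
  finally show ?thesis
    by simp
qed

definition binom_transform_preimage :: "nat \<Rightarrow> real poly \<Rightarrow> real poly" where
  "binom_transform_preimage n P =
     (\<Sum>j\<le>degree P. smult (coeff P j / real (n choose j)) (binomial_poly j))"

lemma binom_transform_binom_transform_preimage:
  assumes "degree P \<le> n"
  shows "binom_transform n (binom_transform_preimage n P) x = poly P x"
proof -
  have "binom_transform n (binom_transform_preimage n P) x = (\<Sum>j\<le>degree P. coeff P j * x ^ j)"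
    unfolding binom_transform_preimage_def binom_transform_sum_smult
    using assms by (intro sum.cong refl) (simp add: binom_transform_binomial_poly)
  then show ?thesis
    by (simp add: poly_altdef)
qed

lemma lead_coeff_binom_transform_preimage:
  "coeff (binom_transform_preimage n P) (degree P)
     = lead_coeff P / (real (n choose degree P) * fact (degree P))"
proof -
  let ?d = "degree P"
  have "coeff (binom_transform_preimage n P) ?d
      = (\<Sum>j\<le>?d. coeff P j / real (n choose j) * coeff (binomial_poly j) ?d)"
    by (simp add: binom_transform_preimage_def coeff_sum)
  also have "\<dots> = coeff P ?d / real (n choose ?d) * coeff (binomial_poly ?d) ?d"
    by (rule sum.remove[of _ ?d, THEN trans]) (auto intro!: sum.neutral coeff_eq_0)
  finally show ?thesis
    by (simp add: lead_coeff_binomial_poly)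
qed

lemma degree_binom_transform_preimage:
  assumes "degree P \<le> n"
  shows "degree (binom_transform_preimage n P) = degree P"
proof -
  have "degree (binom_transform_preimage n P) \<le> degree P"
    unfolding binom_transform_preimage_def by (intro degree_sum_le) auto
  moreover have "lead_coeff P \<noteq> 0 \<or> degree P = 0"
    by auto
  ultimately show ?thesis
    using lead_coeff_binom_transform_preimage[of n P] assms
      le_degree[of "binom_transform_preimage n P" "degree P"]
    by fastforce
qed

lemma pochhammer_div_binomial_fact:
  assumes "k \<le> n"
  shows "pochhammer (real n + 1) k / (real (n choose k) * fact k)
       = (\<Prod>j=1..k. (real n + real j) / (real n - real j + 1))"
proof -
  have "real (n choose k) * fact k = (\<Prod>i<k. real n - real i)"
    by (simp add: binomial_gbinomial gbinomial_prod_rev lessThan_atLeast0)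
  also have "\<dots> = (\<Prod>j=1..k. real n - real j + 1)"
    by (rule prod.reindex_bij_witness[where i = "\<lambda>j. j - 1" and j = Suc]) auto
  finally have "real (n choose k) * fact k = (\<Prod>j=1..k. real n - real j + 1)" .
  moreover have "pochhammer (real n + 1) k = (\<Prod>j=1..k. real n + real j)"
    unfolding pochhammer_prod
    by (rule prod.reindex_bij_witness[where i = "\<lambda>j. j - 1" and j = Suc]) auto
  ultimately show ?thesis
    by (simp add: prod_dividef)
qed

lemma EYr_square_cheb_preimage:
  assumes "k \<le> n" "degree H = k" "\<forall>x\<in>{0..1}. binom_transform n H x = shifted_cheb k x"
  shows "EYr n (\<lambda>y. (poly H y)\<^sup>2)
       = pochhammer (real n + 1) k / (real (n choose k) * fact k)
         * arcsine_mean (shifted_cheb_poly k * shifted_cheb_poly k)"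
proof -
  have "H = binom_transform_preimage n (shifted_cheb_poly k)"
    using assms by (intro binom_transform_inj[of _ n])
      (simp_all add: binom_transform_binom_transform_preimage degree_binom_transform_preimage
        shifted_cheb_eq_poly)
  then have "coeff H k = coeff (shifted_cheb_poly k) k / (real (n choose k) * fact k)"
    using lead_coeff_binom_transform_preimage[of n "shifted_cheb_poly k"] by simp
  then show ?thesis
    using EYr_mult_cheb_preimage[OF assms(3), of H] assms(2) lead_coeff_shifted_cheb_poly_pos[of k]
    by (simp add: power2_eq_square)
qed

theorem mainTheorem10:
  fixes n :: nat
  assumes "n \<ge> 1"
  shows "(\<forall>k\<le>n. \<exists>!H :: real poly. degree H = k \<and>
            (\<forall>x\<in>{0..1}. binom_transform n H x = shifted_cheb k x))
       \<and> (\<forall>H :: nat \<Rightarrow> real poly.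
            (\<forall>k\<le>n. degree (H k) = k \<and>
               (\<forall>x\<in>{0..1}. binom_transform n (H k) x = shifted_cheb k x)) \<longrightarrow>
            (\<forall>k m. m < k \<and> k \<le> n \<longrightarrow>
                EYr n (\<lambda>y. poly (H k) y * poly (H m) y) = 0)
            \<and> EYr n (\<lambda>y. (poly (H 0) y)\<^sup>2) = 1
            \<and> (\<forall>k. 1 \<le> k \<and> k \<le> n \<longrightarrow>
                EYr n (\<lambda>y. (poly (H k) y)\<^sup>2) =
                  1/2 * (\<Prod>j=1..k. (real n + real j) / (real n - real j + 1))))"
proof (intro conjI allI impI)
  fix k assume "k \<le> n"
  let ?H = "binom_transform_preimage n (shifted_cheb_poly k)"
  have "degree ?H = k" "\<forall>x\<in>{0..1}. binom_transform n ?H x = shifted_cheb k x"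
    using \<open>k \<le> n\<close>
    by (simp_all add: degree_binom_transform_preimage binom_transform_binom_transform_preimage
        shifted_cheb_eq_poly)
  then show "\<exists>!H. degree H = k \<and> (\<forall>x\<in>{0..1}. binom_transform n H x = shifted_cheb k x)"
    using \<open>k \<le> n\<close> by (metis binom_transform_inj order_refl)
next
  fix H :: "nat \<Rightarrow> real poly"
  assume H: "\<forall>k\<le>n. degree (H k) = k \<and>
    (\<forall>x\<in>{0..1}. binom_transform n (H k) x = shifted_cheb k x)"
  show "EYr n (\<lambda>y. poly (H k) y * poly (H m) y) = 0" if "m < k \<and> k \<le> n" for k m
    using that H EYr_mult_cheb_preimage[of n "H k" k "H m"] by (simp add: coeff_eq_0)
  show "EYr n (\<lambda>y. (poly (H 0) y)\<^sup>2) = 1"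
    using H EYr_square_cheb_preimage[of 0 n "H 0"] arcsine_mean_shifted_cheb_poly_mult[of 0 0]
    by simp
  show "EYr n (\<lambda>y. (poly (H k) y)\<^sup>2)
      = 1/2 * (\<Prod>j=1..k. (real n + real j) / (real n - real j + 1))" if "1 \<le> k \<and> k \<le> n" for k
    using that H EYr_square_cheb_preimage[of k n "H k"]
    by (simp add: arcsine_mean_shifted_cheb_poly_mult pochhammer_div_binomial_fact)
qed

end
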